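(* Consider the dynamic panel logit AR(1) model with $T=3$: $(Y_0,X,A)$ has an arbitrary joint distribution with $Y_0\in\{0,1\}$, $X=(X_1,X_2,X_3)\in\mathbb{R}^{K\times 3}$, $A\in\mathbb{R}$, and conditionally on $(Y_0,X,A)$ the outcomes $Y=(Y_1,Y_2,Y_3)\in\{0,1\}^3$ satisfy, for $t\in\{1,2,3\}$, $$\Pr(Y_t=1\mid Y_0,\dots,Y_{t-1},X,A)=\frac{\exp(X_t'\beta_0+Y_{t-1}\gamma_0+A)}{1+\exp(X_t'\beta_0+Y_{t-1}\gamma_0+A)}$$ with true parameters $\beta_0\in\mathbb{R}^K$, $\gamma_0\in\mathbb{R}$. Let $x_{ts}=x_t-x_s$ and define the moment functions $$m_0^{(a)}(y,x,\beta,\gamma)=\begin{cases}\exp(x_{12}'\beta)&y=(0,1,0),\\ \exp(x_{13}'\beta-\gamma)&y=(0,1,1),\\ -1&(y_1,y_2)=(1,0),\\ \exp(x_{32}'\beta)-1&y=(1,1,0),\\0&\text{otherwise},\end{cases}\qquad m_0^{(b)}(y,x,\beta,\gamma)=\begin{cases}\exp(x_{23}'\beta)-1&y=(0,0,1),\\ -1&(y_1,y_2)=(0,1),\\ \exp(x_{31}'\beta)&y=(1,0,0),\\ \exp(\gamma+x_{21}'\beta)&y=(1,0,1),\\0&\text{otherwise},\end{cases}$$ $$m_1^{(a)}(y,x,\beta,\gamma)=\begin{cases}\exp(x_{12}'\beta+\gamma)&y=(0,1,0),\\ \exp(x_{13}'\beta)&y=(0,1,1),\\ -1&(y_1,y_2)=(1,0),\\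 \exp(x_{32}'\beta)-1&y=(1,1,0),\\0&\text{otherwise},\end{cases}\qquad m_1^{(b)}(y,x,\beta,\gamma)=\begin{cases}\exp(x_{23}'\beta)-1&y=(0,0,1),\\ -1&(y_1,y_2)=(0,1),\\ \exp(x_{31}'\beta-\gamma)&y=(1,0,0),\\ \exp(x_{21}'\beta)&y=(1,0,1),\\0&\text{otherwise}.\end{cases}$$ For $k\in\{1,\dots,K\}$ let $\mathcal{X}_{k,+}=\{x\in\mathbb{R}^{K\times3}: x_{k,1}\le x_{k,3}<x_{k,2}\text{ or }x_{k,1}<x_{k,3}\le x_{k,2}\}$ and $\mathcal{X}_{k,-}=\{x\in\mathbb{R}^{K\times3}: x_{k,1}\ge x_{k,3}>x_{k,2}\text{ or }x_{k,1}>x_{k,3}\ge x_{k,2}\}$, where $x_{k,t}$ is the $k$-th component of $x_t$; for $s\in\{-,+\}^K$ let $\mathcal{X}_s=\bigcap_{k=1}^K\mathcal{X}_{k,s_k}$, and let $\overline m^{(\xi)}_{y_0,s}(\beta,\gamma)=\mathbb{E}[m^{(\xi)}_{y_0}(Y,X,\beta,\gamma)\mid Y_0=y_0,X\in\mathcal{X}_s]$. Let $y_0\in\{0,1\}$ and $\xi\in\{a,b\}$, and assume that for all $s\in\{-,+\}^K$, $\Pr(Y_0=y_0,X\in\mathcal{X}_s)>0$ and $\overline m^{(\xi)}_{y_0,s}(\beta,\gamma)$ is well-defined. Then the solution $(\beta,\gamma)\in\mathbb{R}^K\times\mathbb{R}$ of $\overline m^{(\xi)}_{y_0,s}(\beta,\gamma)=0$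 for all $s\in\{-,+\}^K$ is unique and equals $(\beta_0,\gamma_0)$; that is, $\beta_0$ and $\gamma_0$ are point-identified.
   Context: Expectations are taken under the true data distribution (generated with $\beta_0,\gamma_0$), while the moment functions are evaluated at an arbitrary candidate $(\beta,\gamma)$. *)

theory Defs
  imports "HOL-Probability.Probability"
begin

text \<open>Dynamic panel logit AR(1) model with T = 3.
  Covariates x = (x1, x2, x3) with each x_t a vector in R^K, modelled as real^'k
  for an arbitrary finite index type 'k (K = CARD('k)).
  Outcomes y = (y1, y2, y3) in {0,1}^3 are triples of booleans (True = 1);
  the initial condition y0 is a boolean (True = 1).\<close>

type_synonym 'k cov = "(real^'k) \<times> (real^'k) \<times> (real^'k)"
type_synonym outc = "bool \<times> bool \<times> bool"

definition logistic :: "real \<Rightarrow> real" where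
  "logistic z = exp z / (1 + exp z)"

definition bern :: "bool \<Rightarrow> real \<Rightarrow> real" where
  "bern b q = (if b then q else 1 - q)"

definition pY :: "real^'k \<Rightarrow> real \<Rightarrow> bool \<Rightarrow> 'k cov \<Rightarrow> real \<Rightarrow> outc \<Rightarrow> real" where
  "pY beta0 gamma0 y0 x a y =
     (case x of (x1, x2, x3) \<Rightarrow> case y of (y1, y2, y3) \<Rightarrow>
        bern y1 (logistic (x1 \<bullet> beta0 + of_bool y0 * gamma0 + a)) *
        bern y2 (logistic (x2 \<bullet> beta0 + of_bool y1 * gamma0 + a)) *
        bern y3 (logistic (x3 \<bullet> beta0 + of_bool y2 * gamma0 + a)))"

datatype xi = XiA | XiB

definition m0a :: "outc \<Rightarrow> 'k cov \<Rightarrow> real^'k \<Rightarrow> real \<Rightarrow> real" where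
  "m0a y x \<beta> \<gamma> = (case x of (x1, x2, x3) \<Rightarrow>
     if y = (False, True, False) then exp ((x1 - x2) \<bullet> \<beta>)
     else if y = (False, True, True) then exp ((x1 - x3) \<bullet> \<beta> - \<gamma>)
     else if fst y = True \<and> fst (snd y) = False then -1
     else if y = (True, True, False) then exp ((x3 - x2) \<bullet> \<beta>) - 1
     else 0)"

definition m0b :: "outc \<Rightarrow> 'k cov \<Rightarrow> real^'k \<Rightarrow> real \<Rightarrow> real" where
  "m0b y x \<beta> \<gamma> = (case x of (x1, x2, x3) \<Rightarrow>
     if y = (False, False, True) then exp ((x2 - x3) \<bullet> \<beta>) - 1
     else if fst y = False \<and> fst (snd y) = True then -1
     else if y = (True, False, False) then exp ((x3 - x1) \<bullet> \<beta>)
     else if y = (True, False, True) then exp (\<gamma> + (x2 - x1) \<bullet> \<beta>)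
     else 0)"

definition m1a :: "outc \<Rightarrow> 'k cov \<Rightarrow> real^'k \<Rightarrow> real \<Rightarrow> real" where
  "m1a y x \<beta> \<gamma> = (case x of (x1, x2, x3) \<Rightarrow>
     if y = (False, True, False) then exp ((x1 - x2) \<bullet> \<beta> + \<gamma>)
     else if y = (False, True, True) then exp ((x1 - x3) \<bullet> \<beta>)
     else if fst y = True \<and> fst (snd y) = False then -1
     else if y = (True, True, False) then exp ((x3 - x2) \<bullet> \<beta>) - 1
     else 0)"

definition m1b :: "outc \<Rightarrow> 'k cov \<Rightarrow> real^'k \<Rightarrow> real \<Rightarrow> real" where
  "m1b y x \<beta> \<gamma> = (case x of (x1, x2, x3) \<Rightarrow>
     if y = (False, False, True) then exp ((x2 - x3) \<bullet> \<beta>) - 1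
     else if fst y = False \<and> fst (snd y) = True then -1
     else if y = (True, False, False) then exp ((x3 - x1) \<bullet> \<beta> - \<gamma>)
     else if y = (True, False, True) then exp ((x2 - x1) \<bullet> \<beta>)
     else 0)"

definition mom :: "bool \<Rightarrow> xi \<Rightarrow> outc \<Rightarrow> 'k cov \<Rightarrow> real^'k \<Rightarrow> real \<Rightarrow> real" where
  "mom y0 \<xi> = (case (y0, \<xi>) of
      (False, XiA) \<Rightarrow> m0a | (False, XiB) \<Rightarrow> m0b
    | (True, XiA) \<Rightarrow> m1a | (True, XiB) \<Rightarrow> m1b)"

text \<open>Covariate regions X_{k,+}, X_{k,-} and X_s for a sign vector
  s :: 'k => bool (True = +, False = -).\<close>
definition Xplus :: "'k::finite \<Rightarrow> 'k cov set" where
  "Xplus k = {(x1, x2, x3). (x1$k \<le> x3$k \<and> x3$k < x2$k) \<or> (x1$k < x3$k \<and> x3$k \<le> x2$k)}"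

definition Xminus :: "'k::finite \<Rightarrow> 'k cov set" where
  "Xminus k = {(x1, x2, x3). (x1$k \<ge> x3$k \<and> x3$k > x2$k) \<or> (x1$k > x3$k \<and> x3$k \<ge> x2$k)}"

definition Xs :: "('k::finite \<Rightarrow> bool) \<Rightarrow> 'k cov set" where
  "Xs s = (\<Inter>k. if s k then Xplus k else Xminus k)"

definition cond_event :: "bool \<Rightarrow> ('k::finite \<Rightarrow> bool) \<Rightarrow> (bool \<times> 'k cov \<times> real) set" where
  "cond_event y0 s = {(y0', x, a). y0' = y0 \<and> x \<in> Xs s}"

text \<open>mu is the (arbitrary) joint law of (Y0, X, A); the law of Y given (Y0, X, A)
  is given by pY.  The conditional mean E[m(Y,X,beta,gamma) | Y0 = y0, X in X_s]
  under the true data distribution is therefore the following ratio.\<close>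
definition mbar ::
  "(bool \<times> ('k::finite) cov \<times> real) measure \<Rightarrow> real^'k \<Rightarrow> real \<Rightarrow> bool \<Rightarrow> xi \<Rightarrow> ('k \<Rightarrow> bool)
     \<Rightarrow> real^'k \<Rightarrow> real \<Rightarrow> real" where
  "mbar \<mu> beta0 gamma0 y0 \<xi> s \<beta> \<gamma> =
     (\<integral>w. indicator (cond_event y0 s) w *
          (\<Sum>y\<in>UNIV. pY beta0 gamma0 (fst w) (fst (snd w)) (snd (snd w)) y
                        * mom y0 \<xi> y (fst (snd w)) \<beta> \<gamma>) \<partial>\<mu>)
     / measure \<mu> (cond_event y0 s)"

text \<open>Well-definedness of mbar at (beta, gamma): E[|m(Y,X,beta,gamma)| ; Y0 = y0, X in X_s] < oo,
  i.e. each outcome's contribution is integrable.\<close>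
definition mbar_welldef ::
  "(bool \<times> ('k::finite) cov \<times> real) measure \<Rightarrow> real^'k \<Rightarrow> real \<Rightarrow> bool \<Rightarrow> xi \<Rightarrow> ('k \<Rightarrow> bool)
     \<Rightarrow> real^'k \<Rightarrow> real \<Rightarrow> bool" where
  "mbar_welldef \<mu> beta0 gamma0 y0 \<xi> s \<beta> \<gamma> =
     (\<forall>y. integrable \<mu> (\<lambda>w. indicator (cond_event y0 s) w *
          (pY beta0 gamma0 (fst w) (fst (snd w)) (snd (snd w)) y
            * mom y0 \<xi> y (fst (snd w)) \<beta> \<gamma>)))"

end

theory Submission
  imports Defs
begin

(* Fix (Y0, X, A) = (y0, x, a). The conditional mean of the moment function is affine in the
   three exponentials exp t_i(beta, gamma) occurring in it, with positive coefficients (the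
   probabilities of the corresponding outcomes), and it vanishes at the true parameters. As the
   exponents t_i are linear, it equals  sum_i c_i (exp t_i(beta - beta0, gamma - gamma0) - 1)  with
   c_i > 0. On the region X_s the signs of x13'delta and x32'delta are prescribed by s, so for
   (delta, d) = (beta - beta0, gamma - gamma0) nonzero a suitable choice of s, depending on the signs
   of delta, d and on y0, makes all three exponents of one sign and not all zero. Then the
   conditional mean of the moment has a strict sign on X_s, uniformly in a, and so does its
   average over the event {Y0 = y0, X in X_s}. *)

lemma sum_UNIV_outc:
  "(\<Sum>y\<in>UNIV. f y) =
     f (False, False, False) + f (False, False, True) + f (False, True, False) + f (False, True, True) +
     f (True, False, False) + f (True, False, True) + f (True, True, False) + f (True, True, True)"
proof -
  have UNIV_eq: "(UNIV :: outc set) = {(False, False, False), (False, False, True), (False, True, False),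
      (False, True, True), (True, False, False), (True, False, True), (True, True, False), (True, True, True)}"
    by auto
  show ?thesis
    by (simp add: UNIV_eq add.assoc)
qed

lemma logistic_pos: "0 < logistic z"
  by (simp add: logistic_def add_pos_pos)

lemma logistic_less_one: "logistic z < 1"
  by (simp add: logistic_def add_pos_pos)

lemma pY_pos: "0 < pY beta0 gamma0 y0 x a y"
  by (auto simp: pY_def bern_def logistic_pos logistic_less_one split: prod.splits)

lemma one_minus_frac: "1 + z \<noteq> 0 \<Longrightarrow> 1 - z / (1 + z) = 1 / (1 + z)" for z :: real
  by (simp add: field_simps)

lemma exp_inner_diff: "exp ((u - v) \<bullet> b) = exp (u \<bullet> b + a) / exp (v \<bullet> b + a)"
  by (simp add: inner_diff_left exp_diff[symmetric])

definition cond_moment ::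
  "real^'k \<Rightarrow> real \<Rightarrow> bool \<Rightarrow> xi \<Rightarrow> 'k cov \<Rightarrow> real \<Rightarrow> real^'k \<Rightarrow> real \<Rightarrow> real" where
  "cond_moment beta0 gamma0 y0 \<xi> x a \<beta> \<gamma> = (\<Sum>y\<in>UNIV. pY beta0 gamma0 y0 x a y * mom y0 \<xi> y x \<beta> \<gamma>)"

lemma cond_moment_true_params: "cond_moment beta0 gamma0 y0 \<xi> x a beta0 gamma0 = 0"
proof -
  obtain x1 x2 x3 where x: "x = (x1, x2, x3)"
    by (cases x)
  define E1 where "E1 = exp (x1 \<bullet> beta0 + a)"
  define E2 where "E2 = exp (x2 \<bullet> beta0 + a)"
  define E3 where "E3 = exp (x3 \<bullet> beta0 + a)"
  define G where "G = exp gamma0"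
  have pos: "0 < E1" "0 < E2" "0 < E3" "0 < G"
    by (simp_all add: E1_def E2_def E3_def G_def)
  then have nz: "1 + E1 \<noteq> 0" "1 + E2 \<noteq> 0" "1 + E3 \<noteq> 0"
    "1 + E1 * G \<noteq> 0" "1 + E2 * G \<noteq> 0" "1 + E3 * G \<noteq> 0"
    by (simp_all add: add_pos_pos less_imp_neq[symmetric])
  have "exp (x1 \<bullet> beta0 + gamma0 + a) = E1 * G" "exp (x2 \<bullet> beta0 + gamma0 + a) = E2 * G"
    "exp (x3 \<bullet> beta0 + gamma0 + a) = E3 * G"
    by (simp_all add: E1_def E2_def E3_def G_def exp_add[symmetric] ac_simps)
  then have logistic:
    "logistic (x1 \<bullet> beta0 + a) = E1 / (1 + E1)" "logistic (x2 \<bullet> beta0 + a) = E2 / (1 + E2)"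
    "logistic (x3 \<bullet> beta0 + a) = E3 / (1 + E3)"
    "logistic (x1 \<bullet> beta0 + gamma0 + a) = E1 * G / (1 + E1 * G)"
    "logistic (x2 \<bullet> beta0 + gamma0 + a) = E2 * G / (1 + E2 * G)"
    "logistic (x3 \<bullet> beta0 + gamma0 + a) = E3 * G / (1 + E3 * G)"
    by (simp_all add: logistic_def E1_def E2_def E3_def)
  have shift: "exp (u + gamma0) = exp u * G" "exp (gamma0 + u) = G * exp u" "exp (u - gamma0) = exp u / G"
    for u by (simp_all add: G_def exp_add exp_diff)
  show ?thesis
    using pos nz
    apply (cases y0; cases \<xi>)
       apply (simp_all add: x cond_moment_def sum_UNIV_outc pY_def mom_def m0a_def m0b_def m1a_def m1b_def
        bern_def logistic exp_inner_diff[of _ _ beta0 a] shift one_minus_frac flip: E1_def E2_def E3_def G_def)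
       apply (simp_all add: divide_simps)
      apply (simp_all add: algebra_simps)
    done
qed

definition mom_exponents :: "bool \<Rightarrow> xi \<Rightarrow> 'k cov \<Rightarrow> real^'k \<Rightarrow> real \<Rightarrow> real \<times> real \<times> real" where
  "mom_exponents y0 \<xi> x \<beta> \<gamma> = (case x of (x1, x2, x3) \<Rightarrow> case (y0, \<xi>) of
      (False, XiA) \<Rightarrow> ((x1 - x2) \<bullet> \<beta>, (x1 - x3) \<bullet> \<beta> - \<gamma>, (x3 - x2) \<bullet> \<beta>)
    | (False, XiB) \<Rightarrow> ((x2 - x3) \<bullet> \<beta>, (x3 - x1) \<bullet> \<beta>, \<gamma> + (x2 - x1) \<bullet> \<beta>)
    | (True, XiA) \<Rightarrow> ((x1 - x2) \<bullet> \<beta> + \<gamma>, (x1 - x3) \<bullet> \<beta>, (x3 - x2) \<bullet> \<beta>)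
    | (True, XiB) \<Rightarrow> ((x2 - x3) \<bullet> \<beta>, (x3 - x1) \<bullet> \<beta> - \<gamma>, (x2 - x1) \<bullet> \<beta>))"

lemma mom_exponents_add:
  "mom_exponents y0 \<xi> x (\<beta> + \<beta>') (\<gamma> + \<gamma>') = mom_exponents y0 \<xi> x \<beta> \<gamma> + mom_exponents y0 \<xi> x \<beta>' \<gamma>'"
  by (cases y0; cases \<xi>) (auto simp: mom_exponents_def inner_add_right split: prod.splits)

fun weighted_expm1 :: "real \<times> real \<times> real \<Rightarrow> real \<times> real \<times> real \<Rightarrow> real" where
  "weighted_expm1 (c1, c2, c3) (t1, t2, t3) = c1 * (exp t1 - 1) + c2 * (exp t2 - 1) + c3 * (exp t3 - 1)"

lemma weighted_expm1_add:
  "weighted_expm1 (c1, c2, c3) ((s1, s2, s3) + t) =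
     weighted_expm1 (c1, c2, c3) (s1, s2, s3) + weighted_expm1 (c1 * exp s1, c2 * exp s2, c3 * exp s3) t"
  by (cases t) (simp add: exp_add algebra_simps)

lemma cond_moment_affine:
  "\<exists>w0 w1 w2 w3. 0 < w1 \<and> 0 < w2 \<and> 0 < w3 \<and>
     (\<forall>\<beta> \<gamma>. cond_moment beta0 gamma0 y0 \<xi> x a \<beta> \<gamma> =
        w0 + weighted_expm1 (w1, w2, w3) (mom_exponents y0 \<xi> x \<beta> \<gamma>))"
proof -
  obtain x1 x2 x3 where x: "x = (x1, x2, x3)"
    by (cases x)
  let ?P = "pY beta0 gamma0 y0 x a"
  show ?thesis
  proof (cases \<xi>)
    case XiA
    have "cond_moment beta0 gamma0 y0 \<xi> x a \<beta> \<gamma> =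
        (?P (False, True, False) + ?P (False, True, True) - ?P (True, False, False) - ?P (True, False, True))
        + weighted_expm1 (?P (False, True, False), ?P (False, True, True), ?P (True, True, False))
            (mom_exponents y0 \<xi> x \<beta> \<gamma>)" for \<beta> \<gamma>
      using XiA by (cases y0)
        (simp_all add: x cond_moment_def sum_UNIV_outc mom_def m0a_def m1a_def mom_exponents_def algebra_simps)
    then show ?thesis
      using pY_pos by blast
  next
    case XiB
    have "cond_moment beta0 gamma0 y0 \<xi> x a \<beta> \<gamma> =
        (?P (True, False, False) + ?P (True, False, True) - ?P (False, True, False) - ?P (False, True, True))
        + weighted_expm1 (?P (False, False, True), ?P (True, False, False), ?P (True, False, True))
            (mom_exponents y0 \<xi> x \<beta> \<gamma>)" for \<beta> \<gamma>
      using XiB by (cases y0)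
        (simp_all add: x cond_moment_def sum_UNIV_outc mom_def m0b_def m1b_def mom_exponents_def algebra_simps)
    then show ?thesis
      using pY_pos by blast
  qed
qed

lemma cond_moment_eq_weighted_expm1:
  "\<exists>c1 c2 c3. 0 < c1 \<and> 0 < c2 \<and> 0 < c3 \<and>
     cond_moment beta0 gamma0 y0 \<xi> x a \<beta> \<gamma> =
       weighted_expm1 (c1, c2, c3) (mom_exponents y0 \<xi> x (\<beta> - beta0) (\<gamma> - gamma0))"
proof -
  obtain w0 w1 w2 w3 where w: "0 < w1" "0 < w2" "0 < w3"
    and affine: "\<And>\<beta> \<gamma>. cond_moment beta0 gamma0 y0 \<xi> x a \<beta> \<gamma> =
      w0 + weighted_expm1 (w1, w2, w3) (mom_exponents y0 \<xi> x \<beta> \<gamma>)"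
    using cond_moment_affine by blast
  obtain s1 s2 s3 where s: "mom_exponents y0 \<xi> x beta0 gamma0 = (s1, s2, s3)"
    by (cases "mom_exponents y0 \<xi> x beta0 gamma0") blast
  have "mom_exponents y0 \<xi> x \<beta> \<gamma> = (s1, s2, s3) + mom_exponents y0 \<xi> x (\<beta> - beta0) (\<gamma> - gamma0)"
    using mom_exponents_add[of y0 \<xi> x beta0 "\<beta> - beta0" gamma0 "\<gamma> - gamma0"] s by simp
  then have "cond_moment beta0 gamma0 y0 \<xi> x a \<beta> \<gamma> - cond_moment beta0 gamma0 y0 \<xi> x a beta0 gamma0 =
      weighted_expm1 (w1 * exp s1, w2 * exp s2, w3 * exp s3)
        (mom_exponents y0 \<xi> x (\<beta> - beta0) (\<gamma> - gamma0))"
    by (simp add: affine s weighted_expm1_add)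
  moreover have "0 < w1 * exp s1" "0 < w2 * exp s2" "0 < w3 * exp s3"
    using w by simp_all
  ultimately show ?thesis
    by (auto simp: cond_moment_true_params)
qed

lemma sign_expm1:
  fixes \<sigma> t :: real
  assumes "\<sigma> \<in> {-1, 1}"
  shows "0 \<le> \<sigma> * t \<Longrightarrow> 0 \<le> \<sigma> * (exp t - 1)" and "0 < \<sigma> * t \<Longrightarrow> 0 < \<sigma> * (exp t - 1)"
  using assms by auto

fun sign_definite :: "real \<Rightarrow> real \<times> real \<times> real \<Rightarrow> bool" where
  "sign_definite \<sigma> (t1, t2, t3) \<longleftrightarrow>
     0 \<le> \<sigma> * t1 \<and> 0 \<le> \<sigma> * t2 \<and> 0 \<le> \<sigma> * t3 \<and> (0 < \<sigma> * t1 \<or> 0 < \<sigma> * t2 \<or> 0 < \<sigma> * t3)"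

lemma weighted_expm1_sign:
  assumes "\<sigma> \<in> {-1, 1}" "0 < c1" "0 < c2" "0 < c3" "sign_definite \<sigma> t"
  shows "0 < \<sigma> * weighted_expm1 (c1, c2, c3) t"
proof -
  obtain t1 t2 t3 where t: "t = (t1, t2, t3)"
    by (cases t)
  have nonneg: "0 \<le> c * (\<sigma> * (exp u - 1))" if "0 < c" "0 \<le> \<sigma> * u" for c u
    using that sign_expm1(1)[OF assms(1)] by simp
  have pos: "0 < c * (\<sigma> * (exp u - 1))" if "0 < c" "0 < \<sigma> * u" for c u
    using that sign_expm1(2)[OF assms(1)] by simp
  have "\<sigma> * weighted_expm1 (c1, c2, c3) t =
      c1 * (\<sigma> * (exp t1 - 1)) + c2 * (\<sigma> * (exp t2 - 1)) + c3 * (\<sigma> * (exp t3 - 1))"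
    by (simp add: t algebra_simps)
  moreover have "0 < \<sigma> * t1 \<or> 0 < \<sigma> * t2 \<or> 0 < \<sigma> * t3"
    using assms(5) by (simp add: t)
  ultimately show ?thesis
    using assms(2-5) nonneg[of c1 t1] nonneg[of c2 t2] nonneg[of c3 t3] pos[of c1 t1] pos[of c2 t2] pos[of c3 t3]
    by (auto simp: t)
qed

lemma inner_signs_on_Xs:
  fixes \<delta> :: "real^'k"
  assumes "(x1, x2, x3) \<in> Xs (\<lambda>k. 0 < \<delta> $ k)"
  shows "(x1 - x3) \<bullet> \<delta> \<le> 0" and "(x3 - x2) \<bullet> \<delta> \<le> 0" and "\<delta> \<noteq> 0 \<Longrightarrow> (x1 - x2) \<bullet> \<delta> < 0"
proof -
  have region: "(x1, x2, x3) \<in> (if 0 < \<delta> $ k then Xplus k else Xminus k)" for k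
    using assms by (simp add: Xs_def)
  have order: "if 0 < \<delta> $ k then x1 $ k \<le> x3 $ k \<and> x3 $ k \<le> x2 $ k \<and> x1 $ k < x2 $ k
      else x2 $ k \<le> x3 $ k \<and> x3 $ k \<le> x1 $ k \<and> x2 $ k < x1 $ k" for k
    using region[of k] by (auto simp: Xplus_def Xminus_def split: if_splits)
  have le13: "(x1 - x3) $ k * \<delta> $ k \<le> 0" and le32: "(x3 - x2) $ k * \<delta> $ k \<le> 0"
    and le12: "(x1 - x2) $ k * \<delta> $ k \<le> 0"
    and lt12: "\<delta> $ k \<noteq> 0 \<Longrightarrow> (x1 - x2) $ k * \<delta> $ k < 0" for k
    using order[of k] by (simp_all add: mult_le_0_iff mult_less_0_iff split: if_splits)
  show "(x1 - x3) \<bullet> \<delta> \<le> 0" "(x3 - x2) \<bullet> \<delta> \<le> 0"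
    using le13 le32 by (simp_all add: inner_vec_def sum_nonpos)
  assume "\<delta> \<noteq> 0"
  then obtain k where "\<delta> $ k \<noteq> 0"
    by (metis vec_eq_iff zero_index)
  have "(\<Sum>i\<in>UNIV. (x1 - x2) $ i * \<delta> $ i) < (\<Sum>i\<in>(UNIV :: 'k set). 0)"
    by (rule sum_strict_mono_ex1) (use le12 lt12 \<open>\<delta> $ k \<noteq> 0\<close> in auto)
  then show "(x1 - x2) \<bullet> \<delta> < 0"
    by (simp add: inner_vec_def)
qed

lemma mom_exponents_sign_definite:
  fixes \<delta> :: "real^'k"
  assumes "(\<delta>, d) \<noteq> (0, 0)"
  obtains s \<sigma> where "\<sigma> \<in> {-1, 1}" "\<forall>x\<in>Xs s. sign_definite \<sigma> (mom_exponents y0 \<xi> x \<delta> d)"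
proof -
  (* On X_s with s k = (0 < rho * delta_k), x13'delta and x32'delta have sign -rho; rho is chosen
     so that in every exponent the d-term has the same sign as the delta-terms, and sigma is that sign. *)
  define \<rho> :: real where "\<rho> = (if y0 = (d < 0) then 1 else -1)"
  define \<sigma> where "\<sigma> = (case \<xi> of XiA \<Rightarrow> - \<rho> | XiB \<Rightarrow> \<rho>)"
  have \<rho>: "\<rho> \<in> {-1, 1}" and \<sigma>: "\<sigma> \<in> {-1, 1}"
    by (auto simp: \<rho>_def \<sigma>_def split: xi.split)
  have "sign_definite \<sigma> (mom_exponents y0 \<xi> x \<delta> d)" if "x \<in> Xs (\<lambda>k. 0 < (\<rho> *\<^sub>R \<delta>) $ k)" for x
  proof -
    obtain x1 x2 x3 where x: "x = (x1, x2, x3)"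
      by (cases x)
    define A where "A = (x1 - x3) \<bullet> \<delta>"
    define B where "B = (x3 - x2) \<bullet> \<delta>"
    have AB: "(x1 - x3) \<bullet> \<delta> = A" "(x3 - x2) \<bullet> \<delta> = B" "(x1 - x2) \<bullet> \<delta> = A + B"
      "(x2 - x3) \<bullet> \<delta> = - B" "(x3 - x1) \<bullet> \<delta> = - A" "(x2 - x1) \<bullet> \<delta> = - (A + B)"
      by (simp_all add: A_def B_def inner_diff_left)
    have "\<rho> * A \<le> 0" "\<rho> * B \<le> 0" "\<delta> \<noteq> 0 \<Longrightarrow> \<rho> * (A + B) < 0"
      using inner_signs_on_Xs[of x1 x2 x3 "\<rho> *\<^sub>R \<delta>"] that \<rho>
      unfolding A_def B_def by (auto simp: x inner_diff_left)
    moreover have "\<delta> = 0 \<Longrightarrow> A = 0 \<and> B = 0"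
      by (simp add: A_def B_def)
    moreover have "\<delta> = 0 \<Longrightarrow> d \<noteq> 0"
      using assms by simp
    ultimately show ?thesis
      by (cases y0; cases \<xi>; cases "d < 0"; cases "\<delta> = 0")
        (auto simp: x mom_exponents_def \<sigma>_def \<rho>_def AB)
  qed
  with \<sigma> that show thesis
    by blast
qed

lemma cond_moment_sign_definite:
  assumes "(\<beta>, \<gamma>) \<noteq> (beta0, gamma0)"
  obtains s \<sigma> where "\<And>x a. x \<in> Xs s \<Longrightarrow> 0 < \<sigma> * cond_moment beta0 gamma0 y0 \<xi> x a \<beta> \<gamma>"
proof -
  have "(\<beta> - beta0, \<gamma> - gamma0) \<noteq> (0, 0)"
    using assms by simp
  then obtain s \<sigma> where \<sigma>: "\<sigma> \<in> {-1, 1}"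
    and definite: "\<forall>x\<in>Xs s. sign_definite \<sigma> (mom_exponents y0 \<xi> x (\<beta> - beta0) (\<gamma> - gamma0))"
    by (rule mom_exponents_sign_definite)
  have "0 < \<sigma> * cond_moment beta0 gamma0 y0 \<xi> x a \<beta> \<gamma>" if "x \<in> Xs s" for x a
  proof -
    obtain c1 c2 c3 where "0 < c1" "0 < c2" "0 < c3" and
      "cond_moment beta0 gamma0 y0 \<xi> x a \<beta> \<gamma> =
         weighted_expm1 (c1, c2, c3) (mom_exponents y0 \<xi> x (\<beta> - beta0) (\<gamma> - gamma0))"
      using cond_moment_eq_weighted_expm1 by blast
    then show ?thesis
      using weighted_expm1_sign \<sigma> definite that by simp
  qed
  with that show thesis
    by blast
qed

lemma integral_indicator_mult_pos:
  fixes f :: "'a \<Rightarrow> real"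
  assumes int: "integrable M (\<lambda>w. indicator C w * f w)"
    and meas: "0 < measure M C" and pos: "\<And>w. w \<in> C \<Longrightarrow> 0 < f w"
  shows "0 < (\<integral>w. indicator C w * f w \<partial>M)"
proof -
  have C: "C \<in> sets M"
    using meas measure_notin_sets by force
  have nonneg: "0 \<le> indicator C w * f w" for w
    using pos by (simp add: indicator_def less_imp_le)
  have "(\<integral>w. indicator C w * f w \<partial>M) \<noteq> 0"
  proof
    assume "(\<integral>w. indicator C w * f w \<partial>M) = 0"
    then have "AE w in M. indicator C w * f w = 0"
      using integral_nonneg_eq_0_iff_AE[OF int] nonneg by simp
    then have "AE w in M. w \<notin> C"
      by eventually_elim (auto simp: indicator_def dest: pos)
    then have "C \<in> null_sets M"
      using AE_iff_null_sets[OF C] by simp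
    then show False
      using meas by (auto simp: measure_def dest: null_setsD1)
  qed
  moreover have "0 \<le> (\<integral>w. indicator C w * f w \<partial>M)"
    using nonneg by simp
  ultimately show ?thesis
    by simp
qed

lemma cond_event_integrand:
  "indicator (cond_event y0 s) w *
     (\<Sum>y\<in>UNIV. pY beta0 gamma0 (fst w) (fst (snd w)) (snd (snd w)) y * mom y0 \<xi> y (fst (snd w)) \<beta> \<gamma>)
   = indicator (cond_event y0 s) w * cond_moment beta0 gamma0 y0 \<xi> (fst (snd w)) (snd (snd w)) \<beta> \<gamma>"
  by (cases "w \<in> cond_event y0 s") (auto simp: cond_event_def cond_moment_def)

lemma mbar_eq_integral_cond_moment:
  "mbar \<mu> beta0 gamma0 y0 \<xi> s \<beta> \<gamma> =
     (\<integral>w. indicator (cond_event y0 s) w * cond_moment beta0 gamma0 y0 \<xi> (fst (snd w)) (snd (snd w)) \<beta> \<gamma> \<partial>\<mu>)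
     / measure \<mu> (cond_event y0 s)"
  by (simp add: mbar_def cond_event_integrand)

lemma integrable_cond_moment:
  assumes "mbar_welldef \<mu> beta0 gamma0 y0 \<xi> s \<beta> \<gamma>"
  shows "integrable \<mu>
    (\<lambda>w. indicator (cond_event y0 s) w * cond_moment beta0 gamma0 y0 \<xi> (fst (snd w)) (snd (snd w)) \<beta> \<gamma>)"
proof -
  have "integrable \<mu> (\<lambda>w. \<Sum>y\<in>UNIV. indicator (cond_event y0 s) w *
      (pY beta0 gamma0 (fst w) (fst (snd w)) (snd (snd w)) y * mom y0 \<xi> y (fst (snd w)) \<beta> \<gamma>))"
    using assms unfolding mbar_welldef_def by (intro Bochner_Integration.integrable_sum) auto
  then show ?thesis
    by (simp add: sum_distrib_left[symmetric] cond_event_integrand)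
qed

lemma mbar_nonzero_if_cond_moment_signed:
  assumes meas: "0 < measure \<mu> (cond_event y0 s)"
    and welldef: "mbar_welldef \<mu> beta0 gamma0 y0 \<xi> s \<beta> \<gamma>"
    and signed: "\<And>x a. x \<in> Xs s \<Longrightarrow> 0 < \<sigma> * cond_moment beta0 gamma0 y0 \<xi> x a \<beta> \<gamma>"
  shows "mbar \<mu> beta0 gamma0 y0 \<xi> s \<beta> \<gamma> \<noteq> 0"
proof -
  let ?C = "cond_event y0 s"
  let ?m = "\<lambda>w. cond_moment beta0 gamma0 y0 \<xi> (fst (snd w)) (snd (snd w)) \<beta> \<gamma>"
  have scaled: "(\<lambda>w. indicator ?C w * (\<sigma> * ?m w)) = (\<lambda>w. \<sigma> * (indicator ?C w * ?m w))"
    by (simp add: fun_eq_iff ac_simps)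
  have "0 < (\<integral>w. indicator ?C w * (\<sigma> * ?m w) \<partial>\<mu>)"
  proof (rule integral_indicator_mult_pos[OF _ meas])
    show "integrable \<mu> (\<lambda>w. indicator ?C w * (\<sigma> * ?m w))"
      unfolding scaled using integrable_cond_moment[OF welldef] by (rule integrable_mult_right)
    show "0 < \<sigma> * ?m w" if "w \<in> ?C" for w
      using signed that by (auto simp: cond_event_def)
  qed
  then have "0 < \<sigma> * (\<integral>w. indicator ?C w * ?m w \<partial>\<mu>)"
    by (simp add: scaled)
  then show ?thesis
    using meas by (auto simp: mbar_eq_integral_cond_moment)
qed

theorem theorem1:
  fixes \<mu> :: "(bool \<times> ((real^'k) \<times> (real^'k) \<times> (real^'k)) \<times> real) measure"
    and beta0 :: "real^'k" and gamma0 :: real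
    and y0 :: bool and \<xi> :: xi
  assumes "prob_space \<mu>"
    and "\<forall>s. measure \<mu> (cond_event y0 s) > 0"
    and "\<forall>s \<beta> \<gamma>. mbar_welldef \<mu> beta0 gamma0 y0 \<xi> s \<beta> \<gamma>"
  shows "\<forall>\<beta> \<gamma>. (\<forall>s. mbar \<mu> beta0 gamma0 y0 \<xi> s \<beta> \<gamma> = 0) \<longleftrightarrow> (\<beta> = beta0 \<and> \<gamma> = gamma0)"
proof (intro allI, rule iffI)
  fix \<beta> \<gamma>
  assume zero: "\<forall>s. mbar \<mu> beta0 gamma0 y0 \<xi> s \<beta> \<gamma> = 0"
  show "\<beta> = beta0 \<and> \<gamma> = gamma0"
  proof (rule ccontr)
    assume "\<not> (\<beta> = beta0 \<and> \<gamma> = gamma0)"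
    then have "(\<beta>, \<gamma>) \<noteq> (beta0, gamma0)"
      by simp
    then obtain s \<sigma> where "\<And>x a. x \<in> Xs s \<Longrightarrow> 0 < \<sigma> * cond_moment beta0 gamma0 y0 \<xi> x a \<beta> \<gamma>"
      using cond_moment_sign_definite[where ?y0.0 = y0 and \<xi> = \<xi>] by metis
    then have "mbar \<mu> beta0 gamma0 y0 \<xi> s \<beta> \<gamma> \<noteq> 0"
      using assms(2,3) by (intro mbar_nonzero_if_cond_moment_signed) blast+
    with zero show False
      by blast
  qed
next
  fix \<beta> \<gamma>
  assume "\<beta> = beta0 \<and> \<gamma> = gamma0"
  then show "\<forall>s. mbar \<mu> beta0 gamma0 y0 \<xi> s \<beta> \<gamma> = 0"
    by (simp add: mbar_eq_integral_cond_moment cond_moment_true_params)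
qed

end
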